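(* Let $\mathbf{X}$ be a finitely supported real random variable with $\mathbf{E}[\mathbf{X}]=0$ and $\mathrm{Var}[\mathbf{X}]=1$. There exists a constant $K=K_{\mathbf{X}}$ such that the following holds: let $f:\mathbb{R}^n\to\mathbb{R}$ be a multilinear polynomial of degree at most $d$ with $\sum_{i=1}^n\widehat{f}(\{i\})^2\ge1$. Let $t\ge1$ and suppose $|\widehat{f}(\{i\})|\le 1/(Ktd)$ for all $i\in[n]$. Then \[ \Pr_{\mathbf{x}\sim\mathbf{X}^{\otimes n}}\big[|f(\mathbf{x})|\ge t\big]\ge\exp\big(-O_{\mathbf{X}}(t^2d^2)\big). \]
   Context: A multilinear polynomial is written $f(x)=\sum_{S\subseteq[n]}\widehat{f}(S)\prod_{i\in S}x_i$; $\mathbf{X}^{\otimes n}$ is a vector of $n$ i.i.d. copies of $\mathbf{X}$. *)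

theory Defs
  imports "HOL-Probability.Probability"
begin

definition mlpoly :: "nat \<Rightarrow> (nat set \<Rightarrow> real) \<Rightarrow> (nat \<Rightarrow> real) \<Rightarrow> real" where
  "mlpoly n fhat x = (\<Sum>S\<in>Pow {..<n}. fhat S * (\<Prod>i\<in>S. x i))"

definition mldegree_le :: "nat \<Rightarrow> (nat set \<Rightarrow> real) \<Rightarrow> nat \<Rightarrow> bool" where
  "mldegree_le n fhat d \<longleftrightarrow> (\<forall>S\<in>Pow {..<n}. fhat S \<noteq> 0 \<longrightarrow> card S \<le> d)"

end

theory Submission
  imports Defs "HOL-Computational_Algebra.Polynomial"
begin

text \<open>
  Write \<open>f\<close> for the polynomial and \<open>Q\<close> for the probability in question. By Bonami's
  hypercontractive inequality for the finitely supported \<open>X\<close>, \<open>E f\<^sup>4 \<le> \<beta>\<^bsup>2d\<^esup> (E f\<^sup>2)\<^sup>2\<close>.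
  If \<open>E f\<^sup>2 \<ge> 4t\<^sup>2\<close>, the Paley--Zygmund inequality gives \<open>Q \<ge> 9/(16\<beta>\<^bsup>2d\<^esup>)\<close>.
  Otherwise we look for a point \<open>\<mu>\<close> with \<open>|f(\<mu>)| \<ge> 2t\<close> on the segment through the origin
  in the direction of the degree-one coefficients: restricted to it, \<open>f\<close> is a univariate
  polynomial of degree at most \<open>d\<close> with a large linear coefficient, and a Markov-type inequality
  for polynomials bounded on \<open>[-1, 1]\<close> (proved by comparison with Chebyshev polynomials)
  yields the point. Since the coordinates of \<open>\<mu>\<close> are small and \<open>X\<close> is bounded, the tilt
  \<open>w(x) = \<Prod>\<^sub>i (1 + \<mu>\<^sub>i x\<^sub>i)\<close> is a probability density with \<open>E[f w] = f(\<mu>)\<close>; two applications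
  of Cauchy--Schwarz give \<open>t\<^sup>4 \<le> E f\<^sup>4 \<cdot> E w\<^sup>4 \<cdot> Q\<^sup>2\<close>, and
  \<open>E w\<^sup>4 \<le> exp(O(\<Sum> \<mu>\<^sub>i\<^sup>2)) = exp(O(t\<^sup>2d\<^sup>2))\<close>.
\<close>

section \<open>Expectations under finitely supported distributions\<close>

lemma expectation_mono_finite_pmf:
  fixes f g :: "'a \<Rightarrow> real"
  assumes "finite (set_pmf p)" and "\<And>x. x \<in> set_pmf p \<Longrightarrow> f x \<le> g x"
  shows "measure_pmf.expectation p f \<le> measure_pmf.expectation p g"
  using assms by (intro integral_mono_AE integrable_measure_pmf_finite AE_pmfI)

lemma expectation_nonneg_finite_pmf:
  fixes f :: "'a \<Rightarrow> real"
  assumes "\<And>x. x \<in> set_pmf p \<Longrightarrow> 0 \<le> f x"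
  shows "0 \<le> measure_pmf.expectation p f"
  using assms by (intro integral_nonneg_AE AE_pmfI)

lemma expectation_Cauchy_Schwarz_finite_pmf:
  fixes f g :: "'a \<Rightarrow> real"
  assumes fin: "finite (set_pmf p)"
  shows "(measure_pmf.expectation p (\<lambda>x. f x * g x))\<^sup>2
           \<le> measure_pmf.expectation p (\<lambda>x. (f x)\<^sup>2) * measure_pmf.expectation p (\<lambda>x. (g x)\<^sup>2)"
proof -
  have sum_form: "measure_pmf.expectation p (\<lambda>x. h x * k x)
      = (\<Sum>x\<in>set_pmf p. (sqrt (pmf p x) * h x) * (sqrt (pmf p x) * k x))" for h k :: "'a \<Rightarrow> real"
    by (subst integral_measure_pmf_real[OF fin]) (auto simp: algebra_simps)
  show ?thesis
    using sum_form[of f g] sum_form[of f f] sum_form[of g g] Cauchy_Schwarz_ineq_sum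
    by (simp add: power2_eq_square)
qed

lemma expectation_pair_pmf_finite:
  fixes f :: "'a \<times> 'b \<Rightarrow> real"
  assumes fin: "finite (set_pmf p)" "finite (set_pmf q)"
  shows "measure_pmf.expectation (pair_pmf p q) f
           = measure_pmf.expectation p (\<lambda>a. measure_pmf.expectation q (\<lambda>b. f (a, b)))"
proof -
  have "measure_pmf.expectation (pair_pmf p q) f
      = (\<Sum>(a, b)\<in>set_pmf p \<times> set_pmf q. f (a, b) * (pmf p a * pmf q b))"
    using fin by (subst integral_measure_pmf_real[where A = "set_pmf p \<times> set_pmf q"])
      (auto intro!: sum.cong simp: pmf_pair)
  also have "\<dots> = (\<Sum>a\<in>set_pmf p. (\<Sum>b\<in>set_pmf q. f (a, b) * pmf q b) * pmf p a)"
    by (simp add: sum.cartesian_product[symmetric] sum_distrib_left sum_distrib_right mult_ac)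
  also have "\<dots> = measure_pmf.expectation p (\<lambda>a. measure_pmf.expectation q (\<lambda>b. f (a, b)))"
    using fin by (simp add: integral_measure_pmf_real[where A = "set_pmf p"]
        integral_measure_pmf_real[where A = "set_pmf q"])
  finally show ?thesis .
qed

lemma paley_zygmund_finite_pmf:
  fixes F :: "'a \<Rightarrow> real"
  assumes fin: "finite (set_pmf p)" and "0 < t" and "0 < B"
    and large: "4 * t\<^sup>2 \<le> measure_pmf.expectation p (\<lambda>x. (F x)\<^sup>2)"
    and fourth: "measure_pmf.expectation p (\<lambda>x. (F x) ^ 4)
                   \<le> B * (measure_pmf.expectation p (\<lambda>x. (F x)\<^sup>2))\<^sup>2"
  shows "9 / (16 * B) \<le> measure_pmf.prob p {x. t \<le> \<bar>F x\<bar>}"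
proof -
  let ?E = "measure_pmf.expectation p"
  define A where "A = {x. t \<le> \<bar>F x\<bar>}"
  have "(F x)\<^sup>2 \<le> (F x)\<^sup>2 * indicator A x + t\<^sup>2" for x
    using \<open>0 < t\<close> by (cases "x \<in> A") (auto simp: A_def simp flip: abs_le_square_iff)
  then have "?E (\<lambda>x. (F x)\<^sup>2) \<le> ?E (\<lambda>x. (F x)\<^sup>2 * indicator A x + t\<^sup>2)"
    using fin by (intro expectation_mono_finite_pmf)
  also have "\<dots> = ?E (\<lambda>x. (F x)\<^sup>2 * indicator A x) + t\<^sup>2"
    using fin by (simp add: integrable_measure_pmf_finite)
  finally have "3 / 4 * ?E (\<lambda>x. (F x)\<^sup>2) \<le> ?E (\<lambda>x. (F x)\<^sup>2 * indicator A x)"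
    using large by linarith
  then have "(3 / 4 * ?E (\<lambda>x. (F x)\<^sup>2))\<^sup>2 \<le> (?E (\<lambda>x. (F x)\<^sup>2 * indicator A x))\<^sup>2"
    using large \<open>0 < t\<close> by (intro power_mono) auto
  also have "\<dots> \<le> ?E (\<lambda>x. (F x) ^ 4) * ?E (\<lambda>x. (indicator A x)\<^sup>2)"
    using expectation_Cauchy_Schwarz_finite_pmf[OF fin, of "\<lambda>x. (F x)\<^sup>2" "indicator A"]
    by (simp flip: power_mult)
  also have "\<dots> = ?E (\<lambda>x. (F x) ^ 4) * measure_pmf.prob p A"
    using fin by (simp add: power2_eq_square flip: indicator_inter_arith)
  also have "\<dots> \<le> B * (?E (\<lambda>x. (F x)\<^sup>2))\<^sup>2 * measure_pmf.prob p A"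
    using fourth by (rule mult_right_mono) simp
  finally have "9 / 16 * (?E (\<lambda>x. (F x)\<^sup>2))\<^sup>2 \<le> B * (?E (\<lambda>x. (F x)\<^sup>2))\<^sup>2 * measure_pmf.prob p A"
    by (simp add: power_mult_distrib power2_eq_square)
  moreover have "0 < ?E (\<lambda>x. (F x)\<^sup>2)"
    by (rule less_le_trans[OF _ large]) (use \<open>0 < t\<close> in simp)
  ultimately show ?thesis
    using \<open>0 < B\<close> by (simp add: A_def field_simps)
qed

lemma tilted_expectation_bound_finite_pmf:
  fixes F w :: "'a \<Rightarrow> real"
  assumes fin: "finite (set_pmf p)" and "0 < t"
    and w_nonneg: "\<And>x. x \<in> set_pmf p \<Longrightarrow> 0 \<le> w x"
    and w_mean: "measure_pmf.expectation p w = 1"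
    and tilted: "2 * t \<le> \<bar>measure_pmf.expectation p (\<lambda>x. F x * w x)\<bar>"
  shows "t ^ 4 \<le> measure_pmf.expectation p (\<lambda>x. (F x) ^ 4)
                   * measure_pmf.expectation p (\<lambda>x. (w x) ^ 4)
                   * (measure_pmf.prob p {x. t \<le> \<bar>F x\<bar>})\<^sup>2"
proof -
  let ?E = "measure_pmf.expectation p"
  define A where "A = {x. t \<le> \<bar>F x\<bar>}"
  have "\<bar>?E (\<lambda>x. F x * w x * (1 - indicator A x))\<bar> \<le> ?E (\<lambda>x. \<bar>F x * w x * (1 - indicator A x)\<bar>)"
    by (rule integral_abs_bound)
  also have "\<dots> \<le> ?E (\<lambda>x. t * w x)"
  proof (intro expectation_mono_finite_pmf[OF fin])
    fix x assume "x \<in> set_pmf p"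
    then show "\<bar>F x * w x * (1 - indicator A x)\<bar> \<le> t * w x"
      using w_nonneg[of x] \<open>0 < t\<close>
      by (cases "x \<in> A") (auto simp: A_def abs_mult intro: mult_right_mono)
  qed
  also have "\<dots> = t"
    using w_mean by simp
  finally have "\<bar>?E (\<lambda>x. F x * w x * (1 - indicator A x))\<bar> \<le> t" .
  moreover have "?E (\<lambda>x. F x * w x)
      = ?E (\<lambda>x. F x * w x * indicator A x) + ?E (\<lambda>x. F x * w x * (1 - indicator A x))"
    using fin by (simp add: integrable_measure_pmf_finite ring_distribs flip: integral_add)
  ultimately have "t \<le> \<bar>?E (\<lambda>x. F x * w x * indicator A x)\<bar>"
    using tilted by linarith
  then have "t\<^sup>2 \<le> (?E (\<lambda>x. F x * w x * indicator A x))\<^sup>2"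
    using \<open>0 < t\<close> abs_le_square_iff by (metis abs_of_pos)
  also have "\<dots> \<le> ?E (\<lambda>x. (F x)\<^sup>2 * (w x)\<^sup>2) * measure_pmf.prob p A"
    using expectation_Cauchy_Schwarz_finite_pmf[OF fin, of "\<lambda>x. F x * w x" "indicator A"] fin
    by (simp add: power_mult_distrib power2_eq_square mult_ac flip: indicator_inter_arith)
  finally have "(t\<^sup>2)\<^sup>2 \<le> (?E (\<lambda>x. (F x)\<^sup>2 * (w x)\<^sup>2) * measure_pmf.prob p A)\<^sup>2"
    using \<open>0 < t\<close> by (intro power_mono) auto
  also have "\<dots> = (?E (\<lambda>x. (F x)\<^sup>2 * (w x)\<^sup>2))\<^sup>2 * (measure_pmf.prob p A)\<^sup>2"
    by (rule power_mult_distrib)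
  also have "\<dots> \<le> ?E (\<lambda>x. (F x) ^ 4) * ?E (\<lambda>x. (w x) ^ 4) * (measure_pmf.prob p A)\<^sup>2"
    using expectation_Cauchy_Schwarz_finite_pmf[OF fin, of "\<lambda>x. (F x)\<^sup>2" "\<lambda>x. (w x)\<^sup>2"]
    by (intro mult_right_mono) (simp_all flip: power_mult)
  finally show ?thesis
    by (simp add: A_def flip: power_mult)
qed

lemma two_abs_cube_mult_le: "2 * \<bar>u ^ 3 * v\<bar> \<le> u ^ 4 + u\<^sup>2 * (v::real)\<^sup>2"
proof -
  have "u\<^sup>2 * (2 * \<bar>u\<bar> * \<bar>v\<bar>) \<le> u\<^sup>2 * (u\<^sup>2 + v\<^sup>2)"
    using sum_squares_bound[of "\<bar>u\<bar>" "\<bar>v\<bar>"] by (intro mult_left_mono) (auto simp: power2_abs)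
  then show ?thesis
    by (simp add: abs_mult power_abs power2_eq_square power3_eq_cube power4_eq_xxxx algebra_simps)
qed

lemma abs_expectation_cube_mult_le:
  fixes G H :: "'a \<Rightarrow> real"
  assumes "finite (set_pmf p)"
  shows "2 * \<bar>measure_pmf.expectation p (\<lambda>x. (G x) ^ 3 * H x)\<bar>
           \<le> measure_pmf.expectation p (\<lambda>x. (G x) ^ 4)
              + measure_pmf.expectation p (\<lambda>x. (G x)\<^sup>2 * (H x)\<^sup>2)"
proof -
  have "2 * \<bar>measure_pmf.expectation p (\<lambda>x. (G x) ^ 3 * H x)\<bar>
      \<le> measure_pmf.expectation p (\<lambda>x. 2 * \<bar>(G x) ^ 3 * H x\<bar>)"
    using integral_abs_bound[of p "\<lambda>x. (G x) ^ 3 * H x"] by simp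
  also have "\<dots> \<le> measure_pmf.expectation p (\<lambda>x. (G x) ^ 4 + (G x)\<^sup>2 * (H x)\<^sup>2)"
    using assms two_abs_cube_mult_le by (intro expectation_mono_finite_pmf)
  also have "\<dots> = measure_pmf.expectation p (\<lambda>x. (G x) ^ 4)
      + measure_pmf.expectation p (\<lambda>x. (G x)\<^sup>2 * (H x)\<^sup>2)"
    using assms by (simp add: integrable_measure_pmf_finite)
  finally show ?thesis .
qed

lemma expectation_Pi_pmf_lessThan_Suc:
  fixes F :: "(nat \<Rightarrow> 'a) \<Rightarrow> real"
  assumes fin: "finite (set_pmf p)"
  shows "measure_pmf.expectation (Pi_pmf {..<Suc n} dflt (\<lambda>_. p)) F
           = measure_pmf.expectation p
               (\<lambda>y. measure_pmf.expectation (Pi_pmf {..<n} dflt (\<lambda>_. p)) (\<lambda>x. F (x(n := y))))"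
proof -
  have "finite (set_pmf (Pi_pmf {..<n} dflt (\<lambda>_. p)))"
    using fin by (auto simp: set_Pi_pmf)
  then show ?thesis
    using fin by (simp add: lessThan_Suc Pi_pmf_insert expectation_pair_pmf_finite)
qed

lemma expectation_Pi_pmf_prod:
  fixes h :: "nat \<Rightarrow> 'a \<Rightarrow> real"
  assumes "finite (set_pmf p)"
  shows "measure_pmf.expectation (Pi_pmf {..<n} dflt (\<lambda>_. p)) (\<lambda>x. \<Prod>i<n. h i (x i))
           = (\<Prod>i<n. measure_pmf.expectation p (h i))"
proof (induction n)
  case (Suc n)
  have "(\<Prod>i<Suc n. h i ((x(n := y)) i)) = h n y * (\<Prod>i<n. h i (x i))" for x y
    by (simp add: lessThan_Suc)
  then have "measure_pmf.expectation (Pi_pmf {..<Suc n} dflt (\<lambda>_. p)) (\<lambda>x. \<Prod>i<Suc n. h i (x i))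
      = measure_pmf.expectation p (\<lambda>y. h n y * (\<Prod>i<n. measure_pmf.expectation p (h i)))"
    unfolding expectation_Pi_pmf_lessThan_Suc[OF assms] by (simp add: Suc.IH)
  then show ?case
    by (simp add: lessThan_Suc mult.commute)
qed simp

section \<open>Multilinear polynomials\<close>

lemma sum_Pow_lessThan_Suc:
  "(\<Sum>S\<in>Pow {..<Suc n}. g S) = (\<Sum>S\<in>Pow {..<n}. g S) + (\<Sum>S\<in>Pow {..<n}. g (insert n S))"
proof -
  have "inj_on (insert n) (Pow {..<n})"
    by (intro inj_onI) (metis PowD insert_ident lessThan_iff less_irrefl subsetD)
  moreover have "Pow {..<n} \<inter> insert n ` Pow {..<n} = {}"
    by auto
  ultimately show ?thesis
    by (simp add: lessThan_Suc Pow_insert sum.union_disjoint sum.reindex)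
qed

lemma mlpoly_fun_upd_Suc:
  "mlpoly (Suc n) f (x(n := y)) = y * mlpoly n (\<lambda>S. f (insert n S)) x + mlpoly n f x"
proof -
  have restrict: "(\<Prod>i\<in>S. (x(n := y)) i) = (\<Prod>i\<in>S. x i)" if "S \<in> Pow {..<n}" for S
    using that by (intro prod.cong) auto
  have "(\<Prod>i\<in>insert n S. (x(n := y)) i) = y * (\<Prod>i\<in>S. x i)" if "S \<in> Pow {..<n}" for S
  proof -
    have "finite S" "n \<notin> S"
      using that finite_subset[of S "{..<n}"] by auto
    then show ?thesis
      using restrict[OF that] by simp
  qed
  then have "(\<Sum>S\<in>Pow {..<n}. f (insert n S) * (\<Prod>i\<in>insert n S. (x(n := y)) i))
      = y * mlpoly n (\<lambda>S. f (insert n S)) x"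
    unfolding mlpoly_def sum_distrib_left by (intro sum.cong) auto
  moreover have "(\<Sum>S\<in>Pow {..<n}. f S * (\<Prod>i\<in>S. (x(n := y)) i)) = mlpoly n f x"
    unfolding mlpoly_def using restrict by (intro sum.cong) auto
  ultimately show ?thesis
    unfolding mlpoly_def[of "Suc n"] sum_Pow_lessThan_Suc by simp
qed

lemma prod_subset_lessThan:
  fixes x :: "nat \<Rightarrow> 'a::comm_monoid_mult"
  assumes "S \<subseteq> {..<n}"
  shows "(\<Prod>i\<in>S. x i) = (\<Prod>i<n. if i \<in> S then x i else 1)"
  using assms by (simp add: prod.If_cases Int_absorb1 Int_absorb2 Collect_mem_eq)

lemma mldegree_ge_1:
  assumes "mldegree_le n f d" and "1 \<le> (\<Sum>i<n. (f {i})\<^sup>2)"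
  shows "1 \<le> d"
proof (rule ccontr)
  assume "\<not> 1 \<le> d"
  then have "f {i} = 0" if "i < n" for i
    using bspec[OF assms(1)[unfolded mldegree_le_def], of "{i}"] that by auto
  then show False
    using assms(2) by simp
qed

definition weighted_fourier_mass :: "real \<Rightarrow> nat \<Rightarrow> (nat set \<Rightarrow> real) \<Rightarrow> real" where
  "weighted_fourier_mass \<beta> n f = (\<Sum>S\<in>Pow {..<n}. \<beta> ^ card S * (f S)\<^sup>2)"

lemma weighted_fourier_mass_Suc:
  "weighted_fourier_mass \<beta> (Suc n) f
     = \<beta> * weighted_fourier_mass \<beta> n (\<lambda>S. f (insert n S)) + weighted_fourier_mass \<beta> n f"
proof -
  have "\<beta> ^ card (insert n S) = \<beta> * \<beta> ^ card S" if "S \<in> Pow {..<n}" for S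
  proof -
    have "finite S" "n \<notin> S"
      using that finite_subset[of S "{..<n}"] by auto
    then show ?thesis
      by simp
  qed
  then have "(\<Sum>S\<in>Pow {..<n}. \<beta> ^ card (insert n S) * (f (insert n S))\<^sup>2)
      = \<beta> * weighted_fourier_mass \<beta> n (\<lambda>S. f (insert n S))"
    unfolding weighted_fourier_mass_def sum_distrib_left by (intro sum.cong) auto
  then show ?thesis
    unfolding weighted_fourier_mass_def[of _ "Suc n"] sum_Pow_lessThan_Suc
    by (simp add: weighted_fourier_mass_def)
qed

lemma weighted_fourier_mass_nonneg: "0 \<le> \<beta> \<Longrightarrow> 0 \<le> weighted_fourier_mass \<beta> n f"
  unfolding weighted_fourier_mass_def by (intro sum_nonneg mult_nonneg_nonneg) auto

lemma weighted_fourier_mass_le: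
  assumes "mldegree_le n f d" and "1 \<le> \<beta>"
  shows "weighted_fourier_mass \<beta> n f \<le> \<beta> ^ d * (\<Sum>S\<in>Pow {..<n}. (f S)\<^sup>2)"
  unfolding weighted_fourier_mass_def sum_distrib_left
proof (intro sum_mono)
  fix S assume "S \<in> Pow {..<n}"
  then have "f S \<noteq> 0 \<Longrightarrow> \<beta> ^ card S \<le> \<beta> ^ d"
    using assms by (intro power_increasing) (auto simp: mldegree_le_def)
  then show "\<beta> ^ card S * (f S)\<^sup>2 \<le> \<beta> ^ d * (f S)\<^sup>2"
    by (cases "f S = 0") (auto intro: mult_right_mono)
qed

definition mlpoly_line :: "nat \<Rightarrow> (nat set \<Rightarrow> real) \<Rightarrow> (nat \<Rightarrow> real) \<Rightarrow> real poly" where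
  "mlpoly_line n f \<mu> = (\<Sum>S\<in>Pow {..<n}. monom (f S * (\<Prod>i\<in>S. \<mu> i)) (card S))"

lemma poly_mlpoly_line: "poly (mlpoly_line n f \<mu>) s = mlpoly n f (\<lambda>i. s * \<mu> i)"
  unfolding mlpoly_line_def mlpoly_def poly_sum poly_monom
  by (intro sum.cong refl) (simp add: prod.distrib mult_ac)

lemma degree_mlpoly_line_le:
  assumes "mldegree_le n f d"
  shows "degree (mlpoly_line n f \<mu>) \<le> d"
  unfolding mlpoly_line_def
proof (intro degree_sum_le)
  fix S assume "S \<in> Pow {..<n}"
  then show "degree (monom (f S * (\<Prod>i\<in>S. \<mu> i)) (card S)) \<le> d"
    using assms degree_monom_le[of "f S * (\<Prod>i\<in>S. \<mu> i)" "card S"]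
    by (cases "f S = 0") (auto simp: mldegree_le_def)
qed simp

lemma coeff_1_mlpoly_line: "coeff (mlpoly_line n f \<mu>) 1 = (\<Sum>i<n. f {i} * \<mu> i)"
proof -
  have "coeff (mlpoly_line n f \<mu>) 1 = (\<Sum>S\<in>{S \<in> Pow {..<n}. card S = 1}. f S * (\<Prod>i\<in>S. \<mu> i))"
    unfolding mlpoly_line_def coeff_sum coeff_monom by (subst sum.inter_filter) auto
  also have "{S \<in> Pow {..<n}. card S = 1} = (\<lambda>i. {i}) ` {..<n}"
    by (auto simp: card_1_singleton_iff)
  also have "(\<Sum>S\<in>(\<lambda>i. {i}) ` {..<n}. f S * (\<Prod>i\<in>S. \<mu> i)) = (\<Sum>i<n. f {i} * \<mu> i)"
    by (subst sum.reindex) (auto simp: inj_on_def)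
  finally show ?thesis .
qed

section \<open>A Markov-type inequality via Chebyshev polynomials\<close>

fun chebyshev :: "nat \<Rightarrow> real poly" where
  "chebyshev 0 = 1"
| "chebyshev (Suc 0) = [:0, 1:]"
| "chebyshev (Suc (Suc n)) = [:0, 2:] * chebyshev (Suc n) - chebyshev n"

lemma poly_chebyshev_cos: "poly (chebyshev n) (cos \<theta>) = cos (real n * \<theta>)"
proof (induction n rule: chebyshev.induct)
  case (3 n)
  have "cos (real (Suc (Suc n)) * \<theta>) + cos (real n * \<theta>) = 2 * cos \<theta> * cos (real (Suc n) * \<theta>)"
    using cos_add[of "real (Suc n) * \<theta>" \<theta>] cos_diff[of "real (Suc n) * \<theta>" \<theta>]
    by (simp add: algebra_simps)
  with 3 show ?case
    by (simp add: algebra_simps)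
qed simp_all

lemma degree_chebyshev_le: "degree (chebyshev n) \<le> n"
proof (induction n rule: chebyshev.induct)
  case (3 n)
  have "degree ([:0, 2:] * chebyshev (Suc n)) \<le> Suc (Suc n)"
    using degree_mult_le[of "[:0, 2:]" "chebyshev (Suc n)"] 3(1) by simp
  with 3(2) show ?case
    by (simp add: degree_diff_le)
qed simp_all

lemma chebyshev_low_coeffs:
  "coeff (chebyshev (2 * j)) 0 = (-1) ^ j \<and> coeff (chebyshev (2 * j + 1)) 0 = 0
     \<and> coeff (chebyshev (2 * j + 1)) 1 = (-1) ^ j * (2 * real j + 1)"
proof (induction j)
  case (Suc j)
  have even: "2 * Suc j = Suc (Suc (2 * j))" and odd: "2 * Suc j + 1 = Suc (Suc (2 * j + 1))"
    by simp_all
  show ?case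
    unfolding odd chebyshev.simps unfolding even chebyshev.simps
    using Suc by (simp add: coeff_mult algebra_simps)
qed simp

lemma cos_pi_fraction_strict_antimono:
  assumes "k < l" and "l \<le> m"
  shows "cos (real l * pi / real m) < cos (real k * pi / real m)"
  using assms by (intro cos_monotone_0_pi) (auto simp: field_simps)

lemma cos_pi_fraction_pos:
  assumes "2 * k < m"
  shows "0 < cos (real k * pi / real m)"
proof -
  have "0 \<le> real k * pi / real m" and "real k * pi / real m < pi / 2"
    using assms by (simp_all add: field_simps)
  with pi_gt_zero show ?thesis
    by (intro cos_gt_zero_pi) linarith+
qed

lemma cos_pi_fraction_neg:
  assumes "m < 2 * k" and "k \<le> m"
  shows "cos (real k * pi / real m) < 0"
proof -
  have "cos (real k * pi / real m) < cos (pi / 2)"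
    using assms by (intro cos_monotone_0_pi) (auto simp: field_simps)
  then show ?thesis
    by simp
qed

lemma degree_ge_of_sign_changes:
  fixes s :: "real poly" and z :: "nat \<Rightarrow> real"
  assumes decreasing: "\<And>k. k < m \<Longrightarrow> z (Suc k) < z k"
    and change: "\<And>k. k < m \<Longrightarrow> poly s (z k) * poly s (z (Suc k)) < 0"
  shows "m \<le> degree s"
proof (cases "m = 0")
  case False
  have "\<exists>r. z (Suc k) < r \<and> r < z k \<and> poly s r = 0" if "k < m" for k
    using poly_IVT[OF decreasing[OF that]] change[OF that] by (auto simp: mult.commute)
  then obtain r where r: "\<And>k. k < m \<Longrightarrow> z (Suc k) < r k \<and> r k < z k \<and> poly s (r k) = 0"
    by metis
  have antimono: "z l \<le> z k" if "k \<le> l" "l \<le> m" for k l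
    using that
  proof (induction l rule: dec_induct)
    case (step n)
    then show ?case
      using decreasing[of n] by linarith
  qed simp
  have "r l < r k" if "k < l" "l < m" for k l
    using r[of k] r[of l] antimono[of "Suc k" l] that by force
  then have "inj_on r {..<m}"
    by (metis inj_on_def lessThan_iff linorder_neqE_nat less_irrefl)
  moreover have "s \<noteq> 0"
    using change[of 0] False by auto
  ultimately have "card (r ` {..<m}) \<le> card {x. poly s x = 0}"
    using r by (intro card_mono poly_roots_finite) auto
  also have "\<dots> \<le> degree s"
    using \<open>s \<noteq> 0\<close> by (rule card_poly_roots_bound)
  finally show ?thesis
    using \<open>inj_on r {..<m}\<close> by (simp add: card_image)
qed simp

lemma degree_ge_of_alternation_around_zero:
  fixes s :: "real poly" and x :: "nat \<Rightarrow> real"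
  assumes "j < m" and x_antimono: "\<And>k l. k < l \<Longrightarrow> l \<le> m \<Longrightarrow> x l < x k"
    and x_pos: "\<And>k. k \<le> j \<Longrightarrow> 0 < x k" and x_neg: "\<And>k. j < k \<Longrightarrow> k \<le> m \<Longrightarrow> x k < 0"
    and sign: "\<And>k. k \<le> m \<Longrightarrow> (-1) ^ (j + k) * (x k * poly s (x k)) < 0"
    and s0: "0 < poly s 0"
  shows "m + 1 \<le> degree s"
proof -
  define y where "y k = (if k \<le> j then x k else if k = j + 1 then 0 else x (k - 1))" for k
  have sign_y: "(-1) ^ (j + k) * poly s (y k) < 0" if "k \<le> m + 1" for k
  proof -
    consider "k \<le> j" | "k = j + 1" | "j + 2 \<le> k"
      by linarith
    then show ?thesis
    proof cases
      case 1
      then show ?thesis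
        using sign[of k] x_pos[of k] \<open>j < m\<close> by (simp add: y_def mult_less_0_iff mult.left_commute)
    next
      case 2
      then show ?thesis
        using s0 by (simp add: y_def)
    next
      case 3
      then have "x (k - 1) < 0"
        using that by (intro x_neg) auto
      moreover have "(-1) ^ (j + k) = - ((-1) ^ (j + (k - 1)) :: real)"
        using 3 by (simp add: power_add power_diff)
      ultimately show ?thesis
        using sign[of "k - 1"] 3 that by (simp add: y_def mult_less_0_iff mult.left_commute)
    qed
  qed
  show ?thesis
  proof (rule degree_ge_of_sign_changes)
    fix k assume "k < m + 1"
    consider "Suc k \<le> j" | "k = j" | "k = j + 1" | "j + 2 \<le> k"
      by linarith
    then show "y (Suc k) < y k"
      using \<open>k < m + 1\<close> \<open>j < m\<close> unfolding y_def by cases (auto intro!: x_antimono x_pos x_neg)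
    have "0 < ((-1) ^ (j + k) * poly s (y k)) * ((-1) ^ (j + Suc k) * poly s (y (Suc k)))"
      using sign_y[of k] sign_y[of "Suc k"] \<open>k < m + 1\<close> by (intro mult_neg_neg) auto
    then show "poly s (y k) * poly s (y (Suc k)) < 0"
      by (simp add: algebra_simps)
  qed
qed

lemma chebyshev_perturbation_sign:
  assumes "0 < m" and bounded: "\<And>x. \<bar>x\<bar> \<le> 1 \<Longrightarrow> \<bar>poly q x\<bar> < 1"
  shows "(-1) ^ (j + k) * poly (q - smult ((-1) ^ j) (chebyshev m)) (cos (real k * pi / real m))
           < 0"
proof -
  have "poly (chebyshev m) (cos (real k * pi / real m)) = (-1) ^ k"
    using \<open>0 < m\<close> by (simp add: poly_chebyshev_cos)
  moreover have "\<bar>(-1) ^ (j + k) * poly q (cos (real k * pi / real m))\<bar> < 1"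
    using bounded[of "cos (real k * pi / real m)"] by (simp add: abs_mult power_abs)
  then have "(-1) ^ (j + k) * poly q (cos (real k * pi / real m)) < 1"
    by (rule le_less_trans[OF abs_ge_self])
  ultimately show ?thesis
    by (simp add: algebra_simps power_add flip: power_mult_distrib)
qed

text \<open>
  If \<open>q'(0)\<close> exceeded \<open>m = 2j + 1\<close>, then \<open>r = q - (-1)\<^sup>j T\<^sub>m\<close> would vanish at \<open>0\<close> with positive
  slope and alternate in sign at the \<open>m + 1\<close> extremal points \<open>cos(k\<pi>/m)\<close> of the Chebyshev
  polynomial \<open>T\<^sub>m\<close>; then \<open>r(x)/x\<close>, of degree below \<open>m\<close>, would have \<open>m + 1\<close> sign changes.
\<close>

lemma coeff_1_le_of_abs_poly_less_1:
  fixes q :: "real poly"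
  assumes deg: "degree q \<le> 2 * j + 1" and q0: "coeff q 0 = 0"
    and bounded: "\<And>x. \<bar>x\<bar> \<le> 1 \<Longrightarrow> \<bar>poly q x\<bar> < 1"
  shows "coeff q 1 \<le> 2 * real j + 1"
proof (rule ccontr)
  assume large: "\<not> ?thesis"
  define m where "m = 2 * j + 1"
  define x where "x k = cos (real k * pi / real m)" for k
  define r where "r = q - smult ((-1) ^ j) (chebyshev m)"
  have cheb: "coeff (chebyshev m) 0 = 0" "coeff (chebyshev m) 1 = (-1) ^ j * (2 * real j + 1)"
    using chebyshev_low_coeffs[of j] by (simp_all add: m_def)
  obtain s where r_eq: "r = pCons 0 s"
    using q0 cheb(1) by (cases r) (auto simp: r_def dest: arg_cong[of _ _ "\<lambda>p. coeff p 0"])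
  have s0: "0 < poly s 0"
    using large arg_cong[OF r_eq, of "\<lambda>p. coeff p 1"] cheb(2)
    by (simp add: r_def poly_0_coeff_0 flip: power_mult_distrib)
  have "degree r \<le> m"
    using deg degree_chebyshev_le[of m] unfolding r_def m_def
    by (intro degree_diff_le) (auto intro: order_trans[OF degree_smult_le])
  then have "degree s < m"
    using s0 by (auto simp: r_eq split: if_splits)
  moreover have "m + 1 \<le> degree s"
  proof (rule degree_ge_of_alternation_around_zero)
    show "j < m"
      by (simp add: m_def)
    show "x l < x k" if "k < l" "l \<le> m" for k l
      unfolding x_def using that by (rule cos_pi_fraction_strict_antimono)
    show "0 < x k" if "k \<le> j" for k
      unfolding x_def using that by (intro cos_pi_fraction_pos) (simp add: m_def)
    show "x k < 0" if "j < k" "k \<le> m" for k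
      unfolding x_def using that by (intro cos_pi_fraction_neg) (simp_all add: m_def)
    have "(-1) ^ (j + k) * poly r (x k) < 0" for k
      unfolding r_def x_def by (rule chebyshev_perturbation_sign) (simp_all add: m_def bounded)
    then show "(-1) ^ (j + k) * (x k * poly s (x k)) < 0" for k
      by (simp add: r_eq)
  qed (fact s0)
  ultimately show False
    by simp
qed

lemma coeff_1_le_of_abs_poly_less:
  fixes P :: "real poly"
  assumes deg: "degree P \<le> 2 * j + 1" and bounded: "\<And>x. \<bar>x\<bar> \<le> 1 \<Longrightarrow> \<bar>poly P x\<bar> < R"
  shows "coeff P 1 \<le> 2 * R * (2 * real j + 1)"
proof -
  have "0 < R"
    using bounded[of 0] by linarith
  define q where "q = smult (1 / (2 * R)) (P - [:poly P 0:])"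
  have "coeff q 1 \<le> 2 * real j + 1"
  proof (rule coeff_1_le_of_abs_poly_less_1)
    show "degree q \<le> 2 * j + 1"
      unfolding q_def using deg by (intro order_trans[OF degree_smult_le] degree_diff_le) auto
    show "coeff q 0 = 0"
      by (simp add: q_def poly_0_coeff_0)
    fix x :: real assume "\<bar>x\<bar> \<le> 1"
    then have "\<bar>poly P x - poly P 0\<bar> < 2 * R"
      using bounded[of x] bounded[of 0] by linarith
    then show "\<bar>poly q x\<bar> < 1"
      using \<open>0 < R\<close> by (simp add: q_def abs_mult)
  qed
  moreover have "coeff [:poly P 0:] 1 = 0"
    using coeff_pCons_Suc[of "poly P 0" 0 0] by simp
  ultimately show ?thesis
    using \<open>0 < R\<close> by (simp add: q_def field_simps)
qed

lemma exists_large_poly_value: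
  fixes P :: "real poly"
  assumes deg: "degree P \<le> d" and large: "4 * R * real d < coeff P 1"
  shows "\<exists>s. \<bar>s\<bar> \<le> 1 \<and> R \<le> \<bar>poly P s\<bar>"
proof (rule ccontr)
  assume "\<not> ?thesis"
  then have bounded: "\<bar>x\<bar> \<le> 1 \<Longrightarrow> \<bar>poly P x\<bar> < R" for x
    by auto
  have "d \<noteq> 0"
  proof
    assume "d = 0"
    then have "coeff P 1 = 0"
      using deg by (simp add: coeff_eq_0)
    with large \<open>d = 0\<close> show False
      by simp
  qed
  then have deg_odd: "degree P \<le> 2 * (d div 2) + 1" and d_le: "2 * real (d div 2) + 1 \<le> 2 * real d"
    using deg by linarith+
  have "coeff P 1 \<le> 2 * R * (2 * real (d div 2) + 1)"
    using deg_odd bounded by (rule coeff_1_le_of_abs_poly_less)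
  also have "\<dots> \<le> 2 * R * (2 * real d)"
    using bounded[of 0] d_le by (intro mult_left_mono) auto
  finally show False
    using large by simp
qed

lemma exists_large_mlpoly_on_segment:
  assumes "mldegree_le n f d" and "8 * t * real d < (\<Sum>i<n. f {i} * \<nu> i)"
  shows "\<exists>s. \<bar>s\<bar> \<le> 1 \<and> 2 * t \<le> \<bar>mlpoly n f (\<lambda>i. s * \<nu> i)\<bar>"
proof -
  have "4 * (2 * t) * real d < coeff (mlpoly_line n f \<nu>) 1"
    unfolding coeff_1_mlpoly_line using assms(2) by simp
  with degree_mlpoly_line_le[OF assms(1)] have "\<exists>s. \<bar>s\<bar> \<le> 1 \<and> 2 * t \<le> \<bar>poly (mlpoly_line n f \<nu>) s\<bar>"
    by (rule exists_large_poly_value)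
  then show ?thesis
    by (simp add: poly_mlpoly_line)
qed

lemma exists_point_with_large_mlpoly:
  assumes deg: "mldegree_le n f d" and mass: "1 \<le> (\<Sum>i<n. (f {i})\<^sup>2)" and "0 < t"
  shows "\<exists>\<mu>. 2 * t \<le> \<bar>mlpoly n f \<mu>\<bar> \<and> (\<forall>i<n. \<bar>\<mu> i\<bar> \<le> 10 * t * real d * \<bar>f {i}\<bar>)
           \<and> (\<Sum>i<n. (\<mu> i)\<^sup>2) \<le> 100 * t\<^sup>2 * (real d)\<^sup>2"
proof -
  define W where "W = (\<Sum>i<n. (f {i})\<^sup>2)"
  define scale where "scale = 10 * t * real d / W"
  have W: "1 \<le> W"
    using mass by (simp add: W_def)
  have "scale \<le> 10 * t * real d / 1"
    unfolding scale_def using W \<open>0 < t\<close> by (intro divide_left_mono) simp_all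
  then have scale_le: "0 \<le> scale" "scale \<le> 10 * t * real d"
    using W \<open>0 < t\<close> by (simp_all add: scale_def)
  have "(\<Sum>i<n. f {i} * (scale * f {i})) = scale * W"
    by (simp add: W_def sum_distrib_left power2_eq_square mult_ac)
  also have "\<dots> = 10 * t * real d"
    using W by (simp add: scale_def)
  finally have mass_scaled: "(\<Sum>i<n. f {i} * (scale * f {i})) = 10 * t * real d" .
  moreover have "1 \<le> d"
    using deg mass by (rule mldegree_ge_1)
  ultimately obtain s where s: "\<bar>s\<bar> \<le> 1" "2 * t \<le> \<bar>mlpoly n f (\<lambda>i. s * (scale * f {i}))\<bar>"
    using exists_large_mlpoly_on_segment[OF deg, of t "\<lambda>i. scale * f {i}"] \<open>0 < t\<close> by auto
  show ?thesis
  proof (intro exI conjI allI impI)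
    show "2 * t \<le> \<bar>mlpoly n f (\<lambda>i. s * (scale * f {i}))\<bar>"
      by (fact s(2))
    have "\<bar>s * (scale * f {i})\<bar> \<le> scale * \<bar>f {i}\<bar>" for i
      using s(1) scale_le by (simp add: abs_mult mult_left_le_one_le)
    also have "scale * \<bar>f {i}\<bar> \<le> 10 * t * real d * \<bar>f {i}\<bar>" for i
      using scale_le by (simp add: mult_right_mono)
    finally show "\<bar>s * (scale * f {i})\<bar> \<le> 10 * t * real d * \<bar>f {i}\<bar>" for i .
    have "(\<Sum>i<n. (s * (scale * f {i}))\<^sup>2) \<le> (\<Sum>i<n. (scale * f {i})\<^sup>2)"
      using s(1)
      by (intro sum_mono) (simp add: power_mult_distrib abs_square_le_1 mult_left_le_one_le)
    also have "\<dots> = scale * (\<Sum>i<n. f {i} * (scale * f {i}))"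
      by (simp add: sum_distrib_left power2_eq_square mult_ac)
    also have "\<dots> = scale * (10 * t * real d)"
      by (simp only: mass_scaled)
    also have "\<dots> \<le> (10 * t * real d) * (10 * t * real d)"
      using scale_le(2) by (rule mult_right_mono) (use \<open>0 < t\<close> in simp)
    also have "\<dots> = 100 * t\<^sup>2 * (real d)\<^sup>2"
      by (simp add: power2_eq_square)
    finally show "(\<Sum>i<n. (s * (scale * f {i}))\<^sup>2) \<le> 100 * t\<^sup>2 * (real d)\<^sup>2" .
  qed
qed

lemma bonami_recursion_bound:
  fixes a b c e A B m3 m4 \<beta> :: real
  assumes "0 \<le> a" "a \<le> A\<^sup>2" "b \<le> B\<^sup>2" "0 \<le> c" "c \<le> A * B" "\<bar>e\<bar> \<le> (a + c) / 2"
    and "0 \<le> m4" "m4 + 2 * \<bar>m3\<bar> \<le> \<beta>\<^sup>2" "\<bar>m3\<bar> + 3 \<le> \<beta>"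
  shows "m4 * a + 4 * m3 * e + 6 * c + b \<le> (\<beta> * A + B)\<^sup>2"
proof -
  have AB: "0 \<le> A * B"
    using assms(4,5) by linarith
  have "4 * m3 * e \<le> 4 * \<bar>m3\<bar> * \<bar>e\<bar>"
    using abs_ge_self[of "m3 * e"] by (simp add: abs_mult)
  also have "\<dots> \<le> 4 * \<bar>m3\<bar> * ((a + c) / 2)"
    using assms(6) by (intro mult_left_mono) auto
  also have "\<dots> \<le> 4 * \<bar>m3\<bar> * ((A\<^sup>2 + A * B) / 2)"
    using assms(2,5) by (intro mult_left_mono) auto
  finally have e: "4 * m3 * e \<le> 2 * \<bar>m3\<bar> * A\<^sup>2 + 2 * \<bar>m3\<bar> * (A * B)"
    by (simp add: algebra_simps)
  have "m4 * a \<le> m4 * A\<^sup>2"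
    using assms(2,7) by (rule mult_left_mono)
  then have "m4 * a + 4 * m3 * e + 6 * c + b
      \<le> (m4 + 2 * \<bar>m3\<bar>) * A\<^sup>2 + (2 * \<bar>m3\<bar> + 6) * (A * B) + B\<^sup>2"
    using e assms(3,5) by (simp add: algebra_simps)
  also have "\<dots> \<le> \<beta>\<^sup>2 * A\<^sup>2 + (2 * \<beta>) * (A * B) + B\<^sup>2"
    using assms(8,9) AB by (intro add_mono mult_right_mono) auto
  also have "\<dots> = (\<beta> * A + B)\<^sup>2"
    by (simp add: power2_sum power_mult_distrib)
  finally show ?thesis .
qed

lemma tail_exponent_bounds:
  fixes \<beta> c T :: real
  assumes "1 \<le> \<beta>" and "0 \<le> c" and "1 \<le> T" and "real d \<le> T"
  defines "L \<equiv> exp (- (100 * c + 2 * ln \<beta> + ln 16) * T)"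
  shows "16 * \<beta> ^ (2 * d) * L \<le> 1" and "exp (100 * c * T) * L \<le> 1"
proof -
  have "\<beta> ^ (2 * d) = exp (real (2 * d) * ln \<beta>)"
    using exp_of_nat_mult[of "2 * d" "ln \<beta>"] assms(1) by simp
  also have "\<dots> \<le> exp (2 * T * ln \<beta>)"
    using assms(1,4) by (simp add: mult_right_mono)
  finally have "16 * \<beta> ^ (2 * d) * L \<le> 16 * exp (2 * T * ln \<beta>) * L"
    by (simp add: L_def)
  also have "\<dots> = exp (ln 16 + 2 * T * ln \<beta> + - (100 * c + 2 * ln \<beta> + ln 16) * T)"
    unfolding L_def exp_add by simp
  also have "\<dots> = exp (- (100 * c * T) - (T - 1) * ln 16)"
    by (simp add: algebra_simps)
  also have "\<dots> \<le> 1"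
  proof -
    have "0 \<le> 100 * c * T" and "0 \<le> (T - 1) * ln 16"
      using assms(2,3) by simp_all
    then have "- (100 * c * T) - (T - 1) * ln 16 \<le> 0"
      by linarith
    then show ?thesis
      by simp
  qed
  finally show "16 * \<beta> ^ (2 * d) * L \<le> 1" .
  have "exp (100 * c * T) * L = exp (- (2 * ln \<beta> + ln 16) * T)"
    by (simp add: L_def algebra_simps flip: exp_add)
  also have "\<dots> \<le> 1"
  proof -
    have "0 \<le> ln \<beta>" and "0 \<le> ln (16 :: real)"
      using assms(1) by simp_all
    then have "- (2 * ln \<beta> + ln 16) \<le> 0"
      by linarith
    then have "- (2 * ln \<beta> + ln 16) * T \<le> 0"
      by (rule mult_nonpos_nonneg) (use assms(3) in simp)
    then show ?thesis
      by simp
  qed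
  finally show "exp (100 * c * T) * L \<le> 1" .
qed

section \<open>Product measures of a standardized distribution\<close>

locale standardized_finite_pmf =
  fixes X :: "real pmf"
  assumes finite_support: "finite (set_pmf X)"
    and mean_zero: "measure_pmf.expectation X (\<lambda>y. y) = 0"
    and second_moment: "measure_pmf.expectation X (\<lambda>y. y\<^sup>2) = 1"
begin

abbreviation Xn :: "nat \<Rightarrow> (nat \<Rightarrow> real) pmf" where
  "Xn n \<equiv> Pi_pmf {..<n} 0 (\<lambda>_. X)"

lemma finite_set_Xn [simp]: "finite (set_pmf (Xn n))"
  using finite_support by (auto simp: set_Pi_pmf)

lemma integrable_X [simp]: "integrable (measure_pmf X) (f :: real \<Rightarrow> real)"
  using finite_support by (rule integrable_measure_pmf_finite)

lemma integrable_Xn [simp]: "integrable (measure_pmf (Xn n)) (F :: (nat \<Rightarrow> real) \<Rightarrow> real)"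
  by (rule integrable_measure_pmf_finite) simp

definition third_moment :: real where "third_moment = measure_pmf.expectation X (\<lambda>y. y ^ 3)"

definition fourth_moment :: real where "fourth_moment = measure_pmf.expectation X (\<lambda>y. y ^ 4)"

lemma fourth_moment_nonneg: "0 \<le> fourth_moment"
  unfolding fourth_moment_def by (intro expectation_nonneg_finite_pmf) simp

lemma expectation_X_quartic:
  "measure_pmf.expectation X (\<lambda>y. a * y ^ 4 + b * y ^ 3 + c * y\<^sup>2 + e * y + g)
     = a * fourth_moment + b * third_moment + c + g"
  by (simp add: third_moment_def fourth_moment_def mean_zero second_moment)

definition bonami_base :: real where "bonami_base = 3 + fourth_moment + 2 * \<bar>third_moment\<bar>"

definition tilt_exponent :: real where "tilt_exponent = 6 + 4 * \<bar>third_moment\<bar> + fourth_moment"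

lemma bonami_base_ge: "3 \<le> bonami_base"
  using fourth_moment_nonneg by (simp add: bonami_base_def)

lemma tilt_exponent_nonneg: "0 \<le> tilt_exponent"
  using fourth_moment_nonneg by (simp add: tilt_exponent_def)

lemma expectation_monomial_mult:
  assumes "S \<subseteq> {..<n}" and "T \<subseteq> {..<n}"
  shows "measure_pmf.expectation (Xn n) (\<lambda>x. (\<Prod>i\<in>S. x i) * (\<Prod>i\<in>T. x i))
           = (if S = T then 1 else 0)"
proof -
  define h where "h i = (\<lambda>y::real. (if i \<in> S then y else 1) * (if i \<in> T then y else 1))" for i
  have coordinate: "measure_pmf.expectation X (h i) = (if i \<in> S \<longleftrightarrow> i \<in> T then 1 else 0)" for i
    using second_moment
    by (cases "i \<in> S"; cases "i \<in> T") (simp_all add: h_def mean_zero power2_eq_square)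
  have "measure_pmf.expectation (Xn n) (\<lambda>x. (\<Prod>i\<in>S. x i) * (\<Prod>i\<in>T. x i))
      = (\<Prod>i<n. measure_pmf.expectation X (h i))"
    unfolding prod_subset_lessThan[OF assms(1)] prod_subset_lessThan[OF assms(2)] h_def
      prod.distrib[symmetric]
    using finite_support by (rule expectation_Pi_pmf_prod)
  also have "\<dots> = (if S = T then 1 else 0)"
    unfolding coordinate using assms by (auto simp: set_eq_iff)
  finally show ?thesis .
qed

lemma expectation_monomial_tilt:
  assumes "S \<subseteq> {..<n}"
  shows "measure_pmf.expectation (Xn n) (\<lambda>x. (\<Prod>i\<in>S. x i) * (\<Prod>i<n. 1 + \<mu> i * x i))
           = (\<Prod>i\<in>S. \<mu> i)"
proof -
  define h where "h i = (\<lambda>y. (if i \<in> S then y else 1) * (1 + \<mu> i * y))" for i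
  have "h i = (if i \<in> S then (\<lambda>y. \<mu> i * y\<^sup>2 + y) else (\<lambda>y. \<mu> i * y + 1))" for i
    by (auto simp: h_def fun_eq_iff power2_eq_square algebra_simps)
  then have coordinate: "measure_pmf.expectation X (h i) = (if i \<in> S then \<mu> i else 1)" for i
    by (simp add: mean_zero second_moment)
  have "measure_pmf.expectation (Xn n) (\<lambda>x. (\<Prod>i\<in>S. x i) * (\<Prod>i<n. 1 + \<mu> i * x i))
      = (\<Prod>i<n. measure_pmf.expectation X (h i))"
    unfolding prod_subset_lessThan[OF assms] h_def prod.distrib[symmetric]
    using finite_support by (rule expectation_Pi_pmf_prod)
  also have "\<dots> = (\<Prod>i\<in>S. \<mu> i)"
    unfolding coordinate prod_subset_lessThan[OF assms] ..
  finally show ?thesis .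
qed

lemma expectation_mlpoly_squared:
  "measure_pmf.expectation (Xn n) (\<lambda>x. (mlpoly n f x)\<^sup>2) = (\<Sum>S\<in>Pow {..<n}. (f S)\<^sup>2)"
proof -
  have "measure_pmf.expectation (Xn n) (\<lambda>x. (mlpoly n f x)\<^sup>2)
      = (\<Sum>S\<in>Pow {..<n}. \<Sum>T\<in>Pow {..<n}. f S * f T
           * measure_pmf.expectation (Xn n) (\<lambda>x. (\<Prod>i\<in>S. x i) * (\<Prod>i\<in>T. x i)))"
    unfolding mlpoly_def power2_eq_square sum_product by (simp add: mult_ac)
  also have "\<dots> = (\<Sum>S\<in>Pow {..<n}. \<Sum>T\<in>Pow {..<n}. if S = T then f S * f T else 0)"
    by (intro sum.cong refl) (simp add: expectation_monomial_mult)
  also have "\<dots> = (\<Sum>S\<in>Pow {..<n}. (f S)\<^sup>2)"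
    by (simp add: power2_eq_square)
  finally show ?thesis .
qed

lemma expectation_mlpoly_tilt:
  "measure_pmf.expectation (Xn n) (\<lambda>x. mlpoly n f x * (\<Prod>i<n. 1 + \<mu> i * x i)) = mlpoly n f \<mu>"
  unfolding mlpoly_def sum_distrib_right
  by (simp add: mult.assoc) (intro sum.cong refl; simp add: expectation_monomial_tilt)

lemma expectation_affine_fourth_power:
  "measure_pmf.expectation X (\<lambda>y. measure_pmf.expectation (Xn n) (\<lambda>x. (y * G x + H x) ^ 4))
     = fourth_moment * measure_pmf.expectation (Xn n) (\<lambda>x. (G x) ^ 4)
       + 4 * third_moment * measure_pmf.expectation (Xn n) (\<lambda>x. (G x) ^ 3 * H x)
       + 6 * measure_pmf.expectation (Xn n) (\<lambda>x. (G x)\<^sup>2 * (H x)\<^sup>2)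
       + measure_pmf.expectation (Xn n) (\<lambda>x. (H x) ^ 4)"
proof -
  let ?E = "measure_pmf.expectation (Xn n)"
  have "(y * G x + H x) ^ 4 = y ^ 4 * (G x) ^ 4 + (4 * y ^ 3) * ((G x) ^ 3 * H x)
      + (6 * y\<^sup>2) * ((G x)\<^sup>2 * (H x)\<^sup>2) + (4 * y) * (G x * (H x) ^ 3) + (H x) ^ 4" for x y
    by algebra
  then have "?E (\<lambda>x. (y * G x + H x) ^ 4) = ?E (\<lambda>x. (G x) ^ 4) * y ^ 4
      + (4 * ?E (\<lambda>x. (G x) ^ 3 * H x)) * y ^ 3 + (6 * ?E (\<lambda>x. (G x)\<^sup>2 * (H x)\<^sup>2)) * y\<^sup>2
      + (4 * ?E (\<lambda>x. G x * (H x) ^ 3)) * y + ?E (\<lambda>x. (H x) ^ 4)" for y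
    by simp
  then have "measure_pmf.expectation X (\<lambda>y. ?E (\<lambda>x. (y * G x + H x) ^ 4))
      = ?E (\<lambda>x. (G x) ^ 4) * fourth_moment + (4 * ?E (\<lambda>x. (G x) ^ 3 * H x)) * third_moment
        + 6 * ?E (\<lambda>x. (G x)\<^sup>2 * (H x)\<^sup>2) + ?E (\<lambda>x. (H x) ^ 4)"
    by (simp only: expectation_X_quartic)
  then show ?thesis
    by (simp add: mult_ac)
qed

lemma bonami_inequality:
  assumes \<beta>_sq: "fourth_moment + 2 * \<bar>third_moment\<bar> \<le> \<beta>\<^sup>2" and \<beta>_ge: "\<bar>third_moment\<bar> + 3 \<le> \<beta>"
  shows "measure_pmf.expectation (Xn n) (\<lambda>x. (mlpoly n f x) ^ 4) \<le> (weighted_fourier_mass \<beta> n f)\<^sup>2"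
proof (induction n arbitrary: f)
  case 0
  then show ?case
    by (simp add: mlpoly_def weighted_fourier_mass_def power4_eq_xxxx power2_eq_square)
next
  case (Suc n)
  let ?E = "measure_pmf.expectation (Xn n)"
  define G H where "G = mlpoly n (\<lambda>S. f (insert n S))" and "H = mlpoly n f"
  define A B where "A = weighted_fourier_mass \<beta> n (\<lambda>S. f (insert n S))"
    and "B = weighted_fourier_mass \<beta> n f"
  define a b c e where "a = ?E (\<lambda>x. (G x) ^ 4)" and "b = ?E (\<lambda>x. (H x) ^ 4)"
    and "c = ?E (\<lambda>x. (G x)\<^sup>2 * (H x)\<^sup>2)" and "e = ?E (\<lambda>x. (G x) ^ 3 * H x)"
  have a_le: "a \<le> A\<^sup>2" and b_le: "b \<le> B\<^sup>2"
    unfolding a_def b_def A_def B_def G_def H_def by (fact Suc.IH)+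
  have a_nonneg: "0 \<le> a" and b_nonneg: "0 \<le> b" and c_nonneg: "0 \<le> c"
    unfolding a_def b_def c_def by (auto intro!: expectation_nonneg_finite_pmf)
  have "c\<^sup>2 \<le> a * b"
    using expectation_Cauchy_Schwarz_finite_pmf[of "Xn n" "\<lambda>x. (G x)\<^sup>2" "\<lambda>x. (H x)\<^sup>2"]
    by (simp add: a_def b_def c_def flip: power_mult)
  also have "\<dots> \<le> (A * B)\<^sup>2"
    using a_le b_le b_nonneg by (simp add: power_mult_distrib mult_mono)
  finally have "c\<^sup>2 \<le> (A * B)\<^sup>2" .
  moreover have "0 \<le> A * B"
    unfolding A_def B_def using \<beta>_ge by (intro mult_nonneg_nonneg weighted_fourier_mass_nonneg) auto
  ultimately have c_le: "c \<le> A * B"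
    by (rule power2_le_imp_le)
  have e_le: "\<bar>e\<bar> \<le> (a + c) / 2"
    using abs_expectation_cube_mult_le[of "Xn n" G H] by (simp add: a_def c_def e_def)
  have "measure_pmf.expectation (Xn (Suc n)) (\<lambda>x. (mlpoly (Suc n) f x) ^ 4)
      = fourth_moment * a + 4 * third_moment * e + 6 * c + b"
    by (simp add: expectation_Pi_pmf_lessThan_Suc[OF finite_support] mlpoly_fun_upd_Suc
        expectation_affine_fourth_power a_def b_def c_def e_def flip: G_def H_def)
  also have "\<dots> \<le> (\<beta> * A + B)\<^sup>2"
    using a_nonneg a_le b_le c_nonneg c_le e_le fourth_moment_nonneg \<beta>_sq \<beta>_ge
    by (rule bonami_recursion_bound)
  also have "\<dots> = (weighted_fourier_mass \<beta> (Suc n) f)\<^sup>2"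
    by (simp add: weighted_fourier_mass_Suc A_def B_def)
  finally show ?case .
qed

lemma expectation_mlpoly_fourth_le:
  assumes "mldegree_le n f d"
  shows "measure_pmf.expectation (Xn n) (\<lambda>x. (mlpoly n f x) ^ 4)
           \<le> bonami_base ^ (2 * d) * (measure_pmf.expectation (Xn n) (\<lambda>x. (mlpoly n f x)\<^sup>2))\<^sup>2"
proof -
  have "fourth_moment + 2 * \<bar>third_moment\<bar> \<le> bonami_base"
    by (simp add: bonami_base_def)
  also have "\<dots> \<le> bonami_base\<^sup>2"
    using bonami_base_ge by (simp add: power2_eq_square)
  finally have "measure_pmf.expectation (Xn n) (\<lambda>x. (mlpoly n f x) ^ 4)
      \<le> (weighted_fourier_mass bonami_base n f)\<^sup>2"
    by (rule bonami_inequality) (use fourth_moment_nonneg in \<open>simp add: bonami_base_def\<close>)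
  also have "\<dots> \<le> (bonami_base ^ d * (\<Sum>S\<in>Pow {..<n}. (f S)\<^sup>2))\<^sup>2"
    using weighted_fourier_mass_le[OF assms] weighted_fourier_mass_nonneg bonami_base_ge
    by (intro power_mono) auto
  also have "\<dots> = bonami_base ^ (2 * d) * (measure_pmf.expectation (Xn n) (\<lambda>x. (mlpoly n f x)\<^sup>2))\<^sup>2"
    by (simp add: expectation_mlpoly_squared power_mult_distrib power_mult mult.commute)
  finally show ?thesis .
qed

lemma expectation_X_tilt_fourth_power:
  assumes "\<bar>\<mu>\<bar> \<le> 1"
  shows "measure_pmf.expectation X (\<lambda>y. (1 + \<mu> * y) ^ 4) \<le> exp (tilt_exponent * \<mu>\<^sup>2)"
proof -
  have "(1 + \<mu> * y) ^ 4
      = \<mu> ^ 4 * y ^ 4 + (4 * \<mu> ^ 3) * y ^ 3 + (6 * \<mu>\<^sup>2) * y\<^sup>2 + (4 * \<mu>) * y + 1" for y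
    by algebra
  then have "measure_pmf.expectation X (\<lambda>y. (1 + \<mu> * y) ^ 4)
      = \<mu> ^ 4 * fourth_moment + 4 * \<mu> ^ 3 * third_moment + 6 * \<mu>\<^sup>2 + 1"
    by (simp add: expectation_X_quartic)
  also have "\<dots> \<le> \<mu>\<^sup>2 * fourth_moment + 4 * \<mu>\<^sup>2 * \<bar>third_moment\<bar> + 6 * \<mu>\<^sup>2 + 1"
  proof -
    have "\<bar>\<mu>\<bar> ^ 4 \<le> \<bar>\<mu>\<bar>\<^sup>2" and cube: "\<bar>\<mu>\<bar> ^ 3 \<le> \<bar>\<mu>\<bar>\<^sup>2"
      using assms by (intro power_decreasing; simp)+
    then have "\<mu> ^ 4 * fourth_moment \<le> \<mu>\<^sup>2 * fourth_moment"
      using fourth_moment_nonneg by (simp add: mult_right_mono)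
    moreover have "third_moment * \<mu> ^ 3 \<le> \<bar>third_moment\<bar> * \<bar>\<mu>\<bar> ^ 3"
      by (metis abs_ge_self abs_mult power_abs)
    moreover have "\<bar>third_moment\<bar> * \<bar>\<mu>\<bar> ^ 3 \<le> \<bar>third_moment\<bar> * \<mu>\<^sup>2"
      using cube by (simp add: mult_left_mono)
    ultimately show ?thesis
      by (simp add: algebra_simps)
  qed
  also have "\<dots> \<le> exp (tilt_exponent * \<mu>\<^sup>2)"
    using exp_ge_add_one_self[of "tilt_exponent * \<mu>\<^sup>2"]
    by (simp add: tilt_exponent_def algebra_simps)
  finally show ?thesis .
qed

lemma expectation_tilt_weight_fourth_power:
  assumes "\<And>i. i < n \<Longrightarrow> \<bar>\<mu> i\<bar> \<le> 1"
  shows "measure_pmf.expectation (Xn n) (\<lambda>x. (\<Prod>i<n. 1 + \<mu> i * x i) ^ 4)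
           \<le> exp (tilt_exponent * (\<Sum>i<n. (\<mu> i)\<^sup>2))"
proof -
  have "measure_pmf.expectation (Xn n) (\<lambda>x. (\<Prod>i<n. 1 + \<mu> i * x i) ^ 4)
      = (\<Prod>i<n. measure_pmf.expectation X (\<lambda>y. (1 + \<mu> i * y) ^ 4))"
    unfolding prod_power_distrib using finite_support by (rule expectation_Pi_pmf_prod)
  also have "\<dots> \<le> (\<Prod>i<n. exp (tilt_exponent * (\<mu> i)\<^sup>2))"
    using assms
    by (intro prod_mono conjI expectation_nonneg_finite_pmf expectation_X_tilt_fourth_power) auto
  also have "\<dots> = exp (tilt_exponent * (\<Sum>i<n. (\<mu> i)\<^sup>2))"
    by (simp add: exp_sum sum_distrib_left)
  finally show ?thesis .
qed

lemma prob_ge_of_large_second_moment: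
  assumes "mldegree_le n f d" and "0 < t"
    and "4 * t\<^sup>2 \<le> measure_pmf.expectation (Xn n) (\<lambda>x. (mlpoly n f x)\<^sup>2)"
  shows "9 / (16 * bonami_base ^ (2 * d)) \<le> measure_pmf.prob (Xn n) {x. t \<le> \<bar>mlpoly n f x\<bar>}"
  using expectation_mlpoly_fourth_le[OF assms(1)] bonami_base_ge assms(2,3)
  by (intro paley_zygmund_finite_pmf) auto

lemma prob_ge_of_tilt:
  assumes support: "\<And>y. y \<in> set_pmf X \<Longrightarrow> \<bar>y\<bar> \<le> M" and "1 \<le> M"
    and \<mu>_small: "\<And>i. i < n \<Longrightarrow> \<bar>\<mu> i\<bar> \<le> 1 / M"
    and "0 < t" and large: "2 * t \<le> \<bar>mlpoly n f \<mu>\<bar>"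
  shows "t ^ 4 \<le> measure_pmf.expectation (Xn n) (\<lambda>x. (mlpoly n f x) ^ 4)
                   * exp (tilt_exponent * (\<Sum>i<n. (\<mu> i)\<^sup>2))
                   * (measure_pmf.prob (Xn n) {x. t \<le> \<bar>mlpoly n f x\<bar>})\<^sup>2"
proof -
  let ?E = "measure_pmf.expectation (Xn n)"
  let ?Q = "measure_pmf.prob (Xn n) {x. t \<le> \<bar>mlpoly n f x\<bar>}"
  define w where "w = (\<lambda>x :: nat \<Rightarrow> real. \<Prod>i<n. 1 + \<mu> i * x i)"
  have "t ^ 4 \<le> ?E (\<lambda>x. (mlpoly n f x) ^ 4) * ?E (\<lambda>x. (w x) ^ 4) * ?Q\<^sup>2"
  proof (rule tilted_expectation_bound_finite_pmf)
    show "0 \<le> w x" if "x \<in> set_pmf (Xn n)" for x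
    proof -
      have "x i \<in> set_pmf X" if "i < n" for i
        using \<open>x \<in> set_pmf (Xn n)\<close> that by (auto simp: set_Pi_pmf PiE_dflt_def)
      then have "\<bar>\<mu> i * x i\<bar> \<le> 1 / M * M" if "i < n" for i
        unfolding abs_mult using that \<open>1 \<le> M\<close> by (intro mult_mono \<mu>_small support) auto
      then show ?thesis
        unfolding w_def using \<open>1 \<le> M\<close> by (intro prod_nonneg) (force simp: abs_le_iff)
    qed
    show "?E w = 1"
      using expectation_monomial_tilt[of "{}" n \<mu>] by (simp add: w_def)
    show "2 * t \<le> \<bar>?E (\<lambda>x. mlpoly n f x * w x)\<bar>"
      using large by (simp add: w_def expectation_mlpoly_tilt)
  qed (simp_all add: \<open>0 < t\<close>)
  also have "\<dots> \<le> ?E (\<lambda>x. (mlpoly n f x) ^ 4) * exp (tilt_exponent * (\<Sum>i<n. (\<mu> i)\<^sup>2)) * ?Q\<^sup>2"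
    unfolding w_def using order_trans[OF \<mu>_small, of _ 1] \<open>1 \<le> M\<close>
    by (intro mult_right_mono mult_left_mono expectation_tilt_weight_fourth_power
        expectation_nonneg_finite_pmf) simp_all
  finally show ?thesis .
qed

lemma prob_ge_of_small_second_moment:
  assumes deg: "mldegree_le n f d" and mass: "1 \<le> (\<Sum>i<n. (f {i})\<^sup>2)" and "0 < t"
    and support: "\<And>y. y \<in> set_pmf X \<Longrightarrow> \<bar>y\<bar> \<le> M" and "1 \<le> M"
    and small: "\<And>i. i < n \<Longrightarrow> \<bar>f {i}\<bar> \<le> 1 / (10 * M * t * real d)"
    and second: "measure_pmf.expectation (Xn n) (\<lambda>x. (mlpoly n f x)\<^sup>2) \<le> 4 * t\<^sup>2"
  shows "1 \<le> 16 * bonami_base ^ (2 * d) * exp (100 * tilt_exponent * (t\<^sup>2 * (real d)\<^sup>2))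
                * (measure_pmf.prob (Xn n) {x. t \<le> \<bar>mlpoly n f x\<bar>})\<^sup>2"
proof -
  let ?E = "measure_pmf.expectation (Xn n)"
  let ?Q = "measure_pmf.prob (Xn n) {x. t \<le> \<bar>mlpoly n f x\<bar>}"
  obtain \<mu> where large: "2 * t \<le> \<bar>mlpoly n f \<mu>\<bar>"
    and \<mu>_le: "\<And>i. i < n \<Longrightarrow> \<bar>\<mu> i\<bar> \<le> 10 * t * real d * \<bar>f {i}\<bar>"
    and \<mu>_sum: "(\<Sum>i<n. (\<mu> i)\<^sup>2) \<le> 100 * t\<^sup>2 * (real d)\<^sup>2"
    using exists_point_with_large_mlpoly[OF deg mass \<open>0 < t\<close>] by blast
  have \<mu>_small: "\<bar>\<mu> i\<bar> \<le> 1 / M" if "i < n" for i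
  proof -
    have "\<bar>\<mu> i\<bar> \<le> 10 * t * real d * \<bar>f {i}\<bar>"
      using that by (rule \<mu>_le)
    also have "\<dots> \<le> 10 * t * real d * (1 / (10 * M * t * real d))"
      using small[OF that] \<open>0 < t\<close> by (intro mult_left_mono) auto
    also have "\<dots> \<le> 1 / M"
      using \<open>0 < t\<close> \<open>1 \<le> M\<close> by (cases "d = 0") simp_all
    finally show ?thesis .
  qed
  have "t ^ 4 \<le> ?E (\<lambda>x. (mlpoly n f x) ^ 4) * exp (tilt_exponent * (\<Sum>i<n. (\<mu> i)\<^sup>2)) * ?Q\<^sup>2"
    using support \<open>1 \<le> M\<close> \<mu>_small \<open>0 < t\<close> large by (rule prob_ge_of_tilt)
  also have "\<dots> \<le> (bonami_base ^ (2 * d) * (4 * t\<^sup>2)\<^sup>2)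
      * exp (100 * tilt_exponent * (t\<^sup>2 * (real d)\<^sup>2)) * ?Q\<^sup>2"
  proof (intro mult_right_mono mult_mono)
    show "?E (\<lambda>x. (mlpoly n f x) ^ 4) \<le> bonami_base ^ (2 * d) * (4 * t\<^sup>2)\<^sup>2"
    proof (rule order_trans[OF expectation_mlpoly_fourth_le[OF deg] mult_left_mono])
      show "(?E (\<lambda>x. (mlpoly n f x)\<^sup>2))\<^sup>2 \<le> (4 * t\<^sup>2)\<^sup>2"
        using second by (intro power_mono expectation_nonneg_finite_pmf) auto
    qed (use bonami_base_ge in simp)
    show "exp (tilt_exponent * (\<Sum>i<n. (\<mu> i)\<^sup>2)) \<le> exp (100 * tilt_exponent * (t\<^sup>2 * (real d)\<^sup>2))"
      using mult_left_mono[OF \<mu>_sum tilt_exponent_nonneg] by (simp add: mult_ac)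
  qed (auto intro!: expectation_nonneg_finite_pmf)
  finally show ?thesis
    using \<open>0 < t\<close> by (simp add: power_mult_distrib field_simps)
qed

lemma anticoncentration:
  assumes support: "\<And>y. y \<in> set_pmf X \<Longrightarrow> \<bar>y\<bar> \<le> M" and "1 \<le> M"
    and deg: "mldegree_le n f d" and mass: "1 \<le> (\<Sum>i<n. (f {i})\<^sup>2)" and "1 \<le> t"
    and small: "\<forall>i<n. \<bar>f {i}\<bar> \<le> 1 / (10 * M * t * real d)"
  shows "exp (- (100 * tilt_exponent + 2 * ln bonami_base + ln 16) * t\<^sup>2 * (real d)\<^sup>2)
           \<le> measure_pmf.prob (Xn n) {x. t \<le> \<bar>mlpoly n f x\<bar>}"
proof -
  let ?Q = "measure_pmf.prob (Xn n) {x. t \<le> \<bar>mlpoly n f x\<bar>}"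
  define T where "T = t\<^sup>2 * (real d)\<^sup>2"
  define L where "L = exp (- (100 * tilt_exponent + 2 * ln bonami_base + ln 16) * T)"
  have "1 \<le> d"
    using deg mass by (rule mldegree_ge_1)
  have "real d \<le> 1 * (real d)\<^sup>2"
    using \<open>1 \<le> d\<close> by (simp add: power2_eq_square)
  also have "\<dots> \<le> t\<^sup>2 * (real d)\<^sup>2"
    using \<open>1 \<le> t\<close> by (intro mult_right_mono) (simp_all add: one_le_power)
  finally have "real d \<le> T" and "1 \<le> T"
    using \<open>1 \<le> d\<close> by (simp_all add: T_def)
  then have L_le: "16 * bonami_base ^ (2 * d) * L \<le> 1" "exp (100 * tilt_exponent * T) * L \<le> 1"
    using tail_exponent_bounds[of bonami_base tilt_exponent T d] bonami_base_ge tilt_exponent_nonneg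
    unfolding L_def by auto
  have "L \<le> ?Q"
  proof (cases "4 * t\<^sup>2 \<le> measure_pmf.expectation (Xn n) (\<lambda>x. (mlpoly n f x)\<^sup>2)")
    case True
    have "L \<le> 9 / (16 * bonami_base ^ (2 * d))"
      using L_le(1) bonami_base_ge by (simp add: field_simps)
    also have "\<dots> \<le> ?Q"
      using deg \<open>1 \<le> t\<close> True by (intro prob_ge_of_large_second_moment) auto
    finally show ?thesis .
  next
    case False
    let ?K = "16 * bonami_base ^ (2 * d) * exp (100 * tilt_exponent * T)"
    have "?K * L\<^sup>2 = (16 * bonami_base ^ (2 * d) * L) * (exp (100 * tilt_exponent * T) * L)"
      by (simp add: power2_eq_square mult_ac)
    also have "\<dots> \<le> 1"
      using mult_mono[OF L_le] by (simp add: L_def)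
    also have "1 \<le> ?K * ?Q\<^sup>2"
      unfolding T_def using deg mass \<open>1 \<le> t\<close> support \<open>1 \<le> M\<close> small False
      by (intro prob_ge_of_small_second_moment[where M = M]) auto
    finally have "L\<^sup>2 \<le> ?Q\<^sup>2"
      using bonami_base_ge by (simp add: mult_le_cancel_left_pos)
    then show ?thesis
      by (rule power2_le_imp_le) simp
  qed
  then show ?thesis
    by (simp add: L_def T_def mult.assoc)
qed

end

theorem lemma4p10:
  fixes X :: "real pmf"
  assumes "finite (set_pmf X)"
    and "measure_pmf.expectation X (\<lambda>x. x) = 0"
    and "measure_pmf.variance X (\<lambda>x. x) = 1"
  shows "\<exists>K>0. \<exists>C>0. \<forall>(n::nat) (d::nat) (fhat :: nat set \<Rightarrow> real) (t::real).
           mldegree_le n fhat d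
         \<longrightarrow> (\<Sum>i<n. (fhat {i})\<^sup>2) \<ge> 1
         \<longrightarrow> t \<ge> 1
         \<longrightarrow> (\<forall>i<n. \<bar>fhat {i}\<bar> \<le> 1 / (K * t * real d))
         \<longrightarrow> measure_pmf.prob (Pi_pmf {..<n} 0 (\<lambda>_. X)) {x. \<bar>mlpoly n fhat x\<bar> \<ge> t}
               \<ge> exp (- C * t\<^sup>2 * (real d)\<^sup>2)"
proof -
  interpret standardized_finite_pmf X
    using assms by unfold_locales simp_all
  define M where "M = max 1 (Max (abs ` set_pmf X))"
  define C where "C = 100 * tilt_exponent + 2 * ln bonami_base + ln 16"
  have support: "\<bar>y\<bar> \<le> M" if "y \<in> set_pmf X" for y
    using assms(1) that by (auto simp: M_def intro: le_max_iff_disj[THEN iffD2] Max_ge)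
  have "1 \<le> M"
    by (simp add: M_def)
  have "0 < C"
    using tilt_exponent_nonneg bonami_base_ge by (simp add: C_def add_nonneg_pos)
  show ?thesis
  proof (rule exI[of _ "10 * M"], intro conjI exI[of _ C] allI impI)
    fix n d fhat t
    assume "mldegree_le n fhat d" "1 \<le> (\<Sum>i<n. (fhat {i})\<^sup>2)" "1 \<le> t"
      and "\<forall>i<n. \<bar>fhat {i}\<bar> \<le> 1 / (10 * M * t * real d)"
    then show "exp (- C * t\<^sup>2 * (real d)\<^sup>2) \<le> measure_pmf.prob (Xn n) {x. t \<le> \<bar>mlpoly n fhat x\<bar>}"
      unfolding C_def using support \<open>1 \<le> M\<close> by (intro anticoncentration)
  qed (use \<open>1 \<le> M\<close> \<open>0 < C\<close> in simp_all)
qed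

end
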